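(* Let $G$ be a threshold graph with $s=\mathrm{seq}(G)$, and suppose $s$ contains at least two ones. Then the length $\psi(G)$ of a longest cycle in $G$ is $$\psi(G)=r(s)+1-h(s'),$$ where $s'=s_1s_2\cdots s_{r(s)-1}$.
   Context: A threshold graph on $n\ge1$ vertices is built from a base vertex $v_0$ by successively adding $v_1,\dots,v_{n-1}$, each either isolated (adjacent to no earlier vertex) or dominating (adjacent to all earlier vertices); its creation sequence $\mathrm{seq}(G)=s_1\cdots s_{n-1}$ has $s_i=1$ if $v_i$ is dominating and $s_i=0$ otherwise. For a binary string $s=s_1\cdots s_m$: $r(s)=\max(\{0\}\cup\{i: s_i=1\})$ (index of the right-most one, or $0$); for $0\le k\le m$ the $k$-th tail is $s_{m-k+1}\cdots s_m$ (empty for $k=0$), $z_k(s)$, $u_k(s)$ are its numbers of zeros and ones, and $h(s)=\max_{0\le k\le m}\{z_k(s)-u_k(s)\}$. *)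

theory Defs
  imports Main
begin

text \<open>A creation sequence is a list s of booleans, s ! (i-1) = s_i (True = dominating = 1).
 The threshold graph with sequence s has vertices 0..length s (vertex i is v_i);
 for i < j, v_i and v_j are adjacent iff v_j is dominating, i.e. s_j = 1.\<close>

definition thr_adj :: "bool list \<Rightarrow> nat \<Rightarrow> nat \<Rightarrow> bool" where
  "thr_adj s i j \<longleftrightarrow> i \<noteq> j \<and> i \<le> length s \<and> j \<le> length s \<and> s ! (max i j - 1)"

definition thr_cycle :: "bool list \<Rightarrow> nat list \<Rightarrow> bool" where
  "thr_cycle s c \<longleftrightarrow> length c \<ge> 3 \<and> distinct c \<and> set c \<subseteq> {0..length s} \<and>
     (\<forall>i < length c. thr_adj s (c ! i) (c ! ((i + 1) mod length c)))"

definition longest_cycle :: "bool list \<Rightarrow> nat" where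
  "longest_cycle s = Max (length ` {c. thr_cycle s c})"

definition rmost :: "bool list \<Rightarrow> nat" where
  "rmost s = Max ({0} \<union> {i. 1 \<le> i \<and> i \<le> length s \<and> s ! (i - 1)})"

definition tail :: "nat \<Rightarrow> bool list \<Rightarrow> bool list" where
  "tail k s = drop (length s - k) s"

definition hval :: "bool list \<Rightarrow> int" where
  "hval s = Max ((\<lambda>k. int (count_list (tail k s) False) - int (count_list (tail k s) True))
                  ` {0..length s})"

end

theory Submission
  imports Defs
begin

text \<open>Write r = r(s) and t = s_1 \<dots> s_(r-1). Every vertex above r is isolated, so a cycle lives on
  v_0, \<dots>, v_r. Fix a tail of t, i.e. a window of vertices just below v_r. On a cycle, every
  isolated vertex of the window must be followed by a larger dominating vertex, which lies in the
  window or is v_r; if the cycle also has vertices below the window, the step entering the window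
  is another such step. Counting these steps shows that the cycle misses at least as many vertices
  as the window has zeros in excess of ones, giving length \<le> r + 1 - h(t). Conversely, a greedy
  sweep through v_0, \<dots>, v_(r-1) builds one path covering all but h(t) of these vertices, and
  v_r closes it into a cycle.\<close>

definition excess :: "bool list \<Rightarrow> int" where
  "excess xs = int (count_list xs False) - int (count_list xs True)"

lemma hval_eq_Max_excess: "hval s = Max ((\<lambda>k. excess (tail k s)) ` {0..length s})"
  unfolding hval_def excess_def ..

lemma hval_nonneg: "0 \<le> hval s"
  unfolding hval_eq_Max_excess
  by (rule Max_ge_iff[THEN iffD2]) (auto simp: tail_def excess_def intro!: bexI[of _ 0])

lemma tail_Suc_snoc: "k \<le> length xs \<Longrightarrow> tail (Suc k) (xs @ [b]) = tail k xs @ [b]"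
  by (simp add: tail_def Suc_diff_le)

lemma hval_snoc: "hval (xs @ [b]) = max 0 (hval xs + (if b then -1 else 1))"
proof -
  have "(\<lambda>k. excess (tail k (xs @ [b]))) ` {0..length (xs @ [b])}
      = insert 0 ((\<lambda>k. excess (tail k xs) + (if b then -1 else 1)) ` {0..length xs})"
    unfolding length_append_singleton atLeast0_atMost_Suc_eq_insert_0 image_insert image_image
    by (intro arg_cong2[where f = insert] image_cong)
      (auto simp: tail_Suc_snoc excess_def tail_def[of 0])
  then show ?thesis
    by (simp add: hval_eq_Max_excess Max_add_commute)
qed

lemma hval_le_count_False: "hval xs \<le> int (count_list xs False)"
proof (induction xs rule: rev_induct)
  case Nil
  then show ?case by (simp add: hval_def tail_def)
next
  case (snoc b xs)
  then show ?case by (simp add: hval_snoc)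
qed

lemma thr_adj_commute: "thr_adj s x y = thr_adj s y x"
  unfolding thr_adj_def by (auto simp: max.commute)

lemma thr_adj_below_dominating: "r \<le> length s \<Longrightarrow> s ! (r - 1) \<Longrightarrow> v < r \<Longrightarrow> thr_adj s v r"
  unfolding thr_adj_def by (simp add: max_def)

definition path_cover :: "bool list \<Rightarrow> nat \<Rightarrow> nat list list \<Rightarrow> bool" where
  "path_cover s n P \<longleftrightarrow> (\<forall>p\<in>set P. p \<noteq> [] \<and> successively (thr_adj s) p) \<and>
     distinct (concat P) \<and> set (concat P) \<subseteq> {0..n}"

lemma path_cover_vertex_le: "path_cover s n P \<Longrightarrow> v \<in> set (concat P) \<Longrightarrow> v \<le> n"
  unfolding path_cover_def by auto

lemma path_cover_mono: "path_cover s n P \<Longrightarrow> n \<le> m \<Longrightarrow> path_cover s m P"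
  unfolding path_cover_def by auto

lemma path_cover_add_isolated: "path_cover s n P \<Longrightarrow> path_cover s (Suc n) ([Suc n] # P)"
  unfolding path_cover_def by auto

lemma path_cover_extend:
  assumes "path_cover s n (p # P)" "Suc n \<le> length s" "s ! n"
  shows "path_cover s (Suc n) ((Suc n # p) # P)"
proof -
  have "p \<noteq> []"
    using assms(1) unfolding path_cover_def by auto
  then have "hd p \<le> n"
    using path_cover_vertex_le[OF assms(1)] by simp
  then have "thr_adj s (Suc n) (hd p)"
    using assms(2,3) thr_adj_below_dominating[of "Suc n" s] thr_adj_commute by simp
  with assms(1) show ?thesis
    unfolding path_cover_def by (cases p) (auto simp: successively_Cons)
qed

lemma path_cover_join:
  assumes "path_cover s n (p # q # P)" "Suc n \<le> length s" "s ! n"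
  shows "path_cover s (Suc n) ((rev p @ Suc n # q) # P)"
proof -
  have ne: "p \<noteq> []" "q \<noteq> []"
    using assms(1) unfolding path_cover_def by auto
  then have le: "hd p \<le> n" "hd q \<le> n"
    using path_cover_vertex_le[OF assms(1)] by simp_all
  have adj: "thr_adj s (hd p) (Suc n)" "thr_adj s (Suc n) (hd q)"
    using le assms(2,3) thr_adj_below_dominating[of "Suc n" s] thr_adj_commute by auto
  have "successively (thr_adj s) (rev p)"
    using assms(1) by (simp add: path_cover_def successively_rev thr_adj_commute)
  moreover have "successively (thr_adj s) (Suc n # q)"
    using assms(1) adj(2) ne(2) by (cases q) (auto simp: path_cover_def successively_Cons)
  ultimately have "successively (thr_adj s) (rev p @ Suc n # q)"
    using adj(1) ne(1) by (simp add: successively_append_iff last_rev)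
  with assms(1) show ?thesis
    unfolding path_cover_def by auto
qed

lemma path_cover_add_dominating:
  assumes "path_cover s n P" "P \<noteq> []" "length P \<le> g + 1" "1 \<le> g" "Suc n \<le> length s" "s ! n"
  shows "\<exists>Q. path_cover s (Suc n) Q \<and> length Q \<le> g \<and> length (concat Q) = Suc (length (concat P))"
proof -
  obtain p P' where p: "P = p # P'"
    using assms(2) by (cases P) auto
  show ?thesis
  proof (cases P')
    case Nil
    then show ?thesis
      using path_cover_extend[of s n p P'] assms p
      by (intro exI[of _ "[Suc n # p]"]) auto
  next
    case (Cons q P'')
    then show ?thesis
      using path_cover_join[of s n p q P''] assms p
      by (intro exI[of _ "(rev p @ Suc n # q) # P''"]) auto
  qed
qed

text \<open>Greedy construction, adding vertices in increasing order: a dominating vertex joins the first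
  two paths (or extends the only one), an isolated vertex starts a new path as long as the
  budget g of paths below it allows, and is skipped otherwise.\<close>

lemma path_cover_exists:
  assumes "n \<le> length s" "1 \<le> g"
  shows "\<exists>P. path_cover s n P \<and> length P \<le> g \<and>
           int (length (concat P)) = int n + 1 - max 0 (hval (take n s) + 1 - int g)"
  using assms
proof (induction n arbitrary: g)
  case 0
  have "path_cover s 0 [[0]]"
    unfolding path_cover_def by simp
  with 0 show ?case
    by (intro exI[of _ "[[0]]"]) (simp add: hval_def tail_def)
next
  case (Suc n)
  define h where "h = hval (take n s)"
  have take_Suc: "take (Suc n) s = take n s @ [s ! n]"
    using Suc.prems(1) by (simp add: take_Suc_conv_app_nth)
  have h_bounds: "0 \<le> h" "h \<le> int n"
    using hval_nonneg hval_le_count_False[of "take n s"] count_le_length[of "take n s" False]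
      Suc.prems(1) unfolding h_def by (auto simp: min_def)
  show ?case
  proof (cases "s ! n")
    case True
    obtain P where P: "path_cover s n P" "length P \<le> g + 1"
      "int (length (concat P)) = int n + 1 - max 0 (h - int g)"
      using Suc.IH[of "g + 1"] Suc.prems unfolding h_def by auto
    moreover have "P \<noteq> []"
      using P(3) h_bounds Suc.prems(2) by auto
    ultimately obtain Q where "path_cover s (Suc n) Q" "length Q \<le> g"
      "length (concat Q) = Suc (length (concat P))"
      using path_cover_add_dominating[of s n P g] Suc.prems True by auto
    then show ?thesis
      using P(3) Suc.prems(2) True by (auto simp: take_Suc hval_snoc h_def[symmetric])
  next
    case False
    show ?thesis
    proof (cases "2 \<le> g")
      case True
      obtain P where "path_cover s n P" "length P \<le> g - 1"
        "int (length (concat P)) = int n + 1 - max 0 (h + 1 - int (g - 1))"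
        using Suc.IH[of "g - 1"] Suc.prems(1) True unfolding h_def by fastforce
      then show ?thesis
        using path_cover_add_isolated[of s n P] True \<open>\<not> s ! n\<close> h_bounds
        by (intro exI[of _ "[Suc n] # P"])
          (auto simp: take_Suc hval_snoc h_def[symmetric] of_nat_diff)
    next
      case False
      obtain P where "path_cover s n P" "length P \<le> g"
        "int (length (concat P)) = int n + 1 - max 0 (h + 1 - int g)"
        using Suc.IH[of g] Suc.prems unfolding h_def by auto
      then show ?thesis
        using path_cover_mono[of s n P] False \<open>\<not> s ! n\<close> Suc.prems(2) h_bounds
        by (intro exI[of _ P]) (auto simp: take_Suc hval_snoc h_def[symmetric])
    qed
  qed
qed

lemma successively_cyclic_nth:
  assumes "successively R c" "R (last c) (hd c)" "i < length c"
  shows "R (c ! i) (c ! (Suc i mod length c))"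
proof (cases "Suc i < length c")
  case True
  then show ?thesis
    using successively_nth[OF assms(1)] by simp
next
  case False
  then have "i = length c - 1" "c \<noteq> []"
    using assms(3) by auto
  then show ?thesis
    using assms(2) by (simp add: last_conv_nth hd_conv_nth)
qed

lemma thr_cycle_close_path:
  assumes "successively (thr_adj s) p" "distinct p" "2 \<le> length p"
    and "\<forall>v\<in>set p. v < r" "r \<le> length s" "s ! (r - 1)"
  shows "thr_cycle s (p @ [r])"
proof -
  have "p \<noteq> []"
    using assms(3) by auto
  then have p: "p \<noteq> []" "last p < r" "hd p < r"
    using assms(4) by auto
  have "thr_adj s v r" if "v < r" for v
    using that assms(5,6) by (rule thr_adj_below_dominating[rotated 2])
  with p have "successively (thr_adj s) (p @ [r])" "thr_adj s r (hd p)"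
    using assms(1) thr_adj_commute by (auto simp: successively_append_iff)
  then have "thr_adj s ((p @ [r]) ! i) ((p @ [r]) ! (Suc i mod length (p @ [r])))"
    if "i < length (p @ [r])" for i
    using successively_cyclic_nth[OF _ _ that] p(1) by simp
  then show ?thesis
    using assms by (auto simp: thr_cycle_def)
qed

lemma longest_cycle_eqI:
  assumes "thr_cycle s c" "\<And>c'. thr_cycle s c' \<Longrightarrow> length c' \<le> length c"
  shows "longest_cycle s = length c"
  unfolding longest_cycle_def
proof (rule Max_eqI)
  show "finite (length ` {c. thr_cycle s c})"
    using assms(2) by (auto simp: finite_nat_set_iff_bounded_le)
qed (use assms in auto)

lemma nth_True_less_rmost: "i < length s \<Longrightarrow> s ! i \<Longrightarrow> i < rmost s"
  unfolding rmost_def by (subst Suc_le_eq[symmetric], rule Max_ge) auto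

lemma rmost_pos: "True \<in> set s \<Longrightarrow> 0 < rmost s"
  using nth_True_less_rmost by (fastforce simp: in_set_conv_nth)

lemma rmost_dominating:
  assumes "0 < rmost s"
  shows "rmost s \<le> length s" "s ! (rmost s - 1)"
proof -
  have "rmost s \<in> {0} \<union> {i. 1 \<le> i \<and> i \<le> length s \<and> s ! (i - 1)}"
    unfolding rmost_def by (rule Max_in) auto
  with assms show "rmost s \<le> length s" "s ! (rmost s - 1)"
    by auto
qed

lemma thr_adj_rmost:
  assumes "thr_adj s x y"
  shows "0 < rmost s" "x \<le> rmost s"
proof -
  have "0 < max x y" "max x y - 1 < length s" "s ! (max x y - 1)"
    using assms unfolding thr_adj_def by auto
  moreover from this(2,3) have "max x y - 1 < rmost s"
    by (rule nth_True_less_rmost)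
  ultimately show "0 < rmost s" "x \<le> rmost s"
    by linarith+
qed

lemma count_True_take_rmost:
  assumes "True \<in> set s"
  shows "count_list s True = Suc (count_list (take (rmost s - 1) s) True)"
proof -
  have r: "0 < rmost s" "rmost s \<le> length s" "s ! (rmost s - 1)"
    using rmost_pos[OF assms] rmost_dominating by auto
  have "True \<notin> set (drop (rmost s) s)"
  proof
    assume "True \<in> set (drop (rmost s) s)"
    then obtain i where "rmost s + i < length s" "s ! (rmost s + i)"
      by (auto simp: in_set_conv_nth less_diff_conv add.commute)
    then show False
      using nth_True_less_rmost by fastforce
  qed
  have "take (rmost s - 1) s @ s ! (rmost s - 1) # drop (rmost s) s = s"
    using r(1,2) by (metis Suc_diff_1 Suc_le_lessD append_take_drop_id Cons_nth_drop_Suc)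
  then have "count_list s True
      = count_list (take (rmost s - 1) s @ s ! (rmost s - 1) # drop (rmost s) s) True"
    by simp
  also have "\<dots> = Suc (count_list (take (rmost s - 1) s) True)"
    using r(3) \<open>True \<notin> set (drop (rmost s) s)\<close> by (simp add: count_notin)
  finally show ?thesis .
qed

lemma count_list_False_True: "count_list xs False + count_list xs True = length xs"
  by (induction xs) auto

lemma exists_thr_cycle_length_eq:
  assumes "2 \<le> count_list s True"
  shows "\<exists>c. thr_cycle s c \<and> int (length c) = int (rmost s) + 1 - hval (take (rmost s - 1) s)"
proof -
  define r where "r = rmost s"
  define t where "t = take (r - 1) s"
  have "True \<in> set s"
    using assms count_notin by fastforce
  then have "0 < r" and ct: "1 \<le> count_list t True"
    using assms rmost_pos count_True_take_rmost unfolding r_def t_def by auto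
  then have r: "0 < r" "r \<le> length s" "s ! (r - 1)"
    using rmost_dominating unfolding r_def by auto
  have "hval t + 2 \<le> int r"
    using r ct hval_le_count_False[of t] count_list_False_True[of t] by (simp add: t_def)
  have "r - 1 \<le> length s"
    using r(2) by simp
  from path_cover_exists[OF this order.refl]
  obtain P where P: "path_cover s (r - 1) P" "length P \<le> 1"
    "int (length (concat P)) = int (r - 1) + 1 - max 0 (hval t)"
    unfolding t_def by auto
  have len: "int (length (concat P)) = int r - hval t"
    using P(3) hval_nonneg[of t] r(1) by (simp add: of_nat_diff)
  obtain p where p: "P = [p]"
    using P(2) len \<open>hval t + 2 \<le> int r\<close> by (cases P) auto
  have "thr_cycle s (p @ [r])"
    using P(1) len \<open>hval t + 2 \<le> int r\<close> r
    by (intro thr_cycle_close_path) (auto simp: p path_cover_def subset_iff)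
  moreover have "int (length (p @ [r])) = int r + 1 - hval t"
    using len p by simp
  ultimately show ?thesis
    unfolding r_def t_def by blast
qed

lemma thr_cycle_adj:
  "thr_cycle s c \<Longrightarrow> i < length c \<Longrightarrow> thr_adj s (c ! i) (c ! (Suc i mod length c))"
  unfolding thr_cycle_def by simp

lemma thr_cycle_le_rmost:
  assumes "thr_cycle s c" "v \<in> set c"
  shows "v \<le> rmost s"
proof -
  obtain i where "i < length c" "c ! i = v"
    using assms(2) by (auto simp: in_set_conv_nth)
  then show ?thesis
    using thr_adj_rmost(2)[OF thr_cycle_adj[OF assms(1)]] by blast
qed

lemma thr_cycle_ascent:
  assumes "thr_cycle s c" "i < length c"
    and "\<not> s ! (c ! i - 1) \<or> c ! i < c ! (Suc i mod length c)"
  defines "w \<equiv> c ! (Suc i mod length c)"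
  shows "c ! i < w" "s ! (w - 1)" "w \<le> rmost s"
proof -
  have adj: "thr_adj s (c ! i) w"
    using thr_cycle_adj[OF assms(1,2)] unfolding w_def .
  then show "c ! i < w"
    using assms(3) unfolding w_def thr_adj_def by (auto simp: max_def split: if_splits)
  with adj show "s ! (w - 1)"
    unfolding thr_adj_def by (simp add: max_def)
  show "w \<le> rmost s"
    using adj thr_adj_commute thr_adj_rmost(2)[of s w "c ! i"] by simp
qed

lemma card_positions_in:
  assumes "distinct c"
  shows "card {i. i < length c \<and> c ! i \<in> X} = card (X \<inter> set c)"
proof -
  have "nth c ` {i. i < length c \<and> c ! i \<in> X} = X \<inter> set c"
    by (auto simp: in_set_conv_nth)
  moreover have "inj_on (nth c) {i. i < length c \<and> c ! i \<in> X}"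
    using assms by (intro inj_on_nth) auto
  ultimately show ?thesis
    by (metis card_image)
qed

lemma inj_on_Suc_mod: "inj_on (\<lambda>i. Suc i mod n) {..<n}"
  by (auto simp: inj_on_def mod_Suc split: if_splits)

lemma card_le_by_cyclic_successor:
  assumes "distinct c" "\<And>i. i < length c \<Longrightarrow> P i \<Longrightarrow> c ! (Suc i mod length c) \<in> Y"
  shows "card {i. i < length c \<and> P i} \<le> card (Y \<inter> set c)"
proof -
  have "card {i. i < length c \<and> P i} \<le> card {i. i < length c \<and> c ! i \<in> Y}"
  proof (rule card_inj_on_le)
    show "inj_on (\<lambda>i. Suc i mod length c) {i. i < length c \<and> P i}"
      by (rule inj_on_subset[OF inj_on_Suc_mod]) auto
  qed (use assms(2) in \<open>auto intro!: mod_less_divisor\<close>)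
  then show ?thesis
    using card_positions_in[OF assms(1)] by simp
qed

lemma cyclic_transition:
  assumes "p < n" "q < n" "P p" "\<not> P q"
  shows "\<exists>i<n. P i \<and> \<not> P (Suc i mod n)"
proof (rule ccontr)
  assume no_exit: "\<not> ?thesis"
  have "P ((p + j) mod n)" for j
  proof (induction j)
    case 0
    then show ?case using assms by simp
  next
    case (Suc j)
    have "(p + Suc j) mod n = Suc ((p + j) mod n) mod n"
      by (simp add: mod_Suc_eq)
    moreover have "(p + j) mod n < n"
      using assms by simp
    ultimately show ?case
      using no_exit Suc by auto
  qed
  from this[of "q + n - p"] have "P ((q + n) mod n)"
    using assms by simp
  then show False
    using assms by simp
qed

lemma thr_cycle_step_into_window:
  assumes "thr_cycle s c" "i < length c"
    and "c ! i \<in> {v \<in> {a<..<rmost s}. \<not> s ! (v - 1)} \<or> c ! i \<le> a \<and> a < c ! (Suc i mod length c)"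
  shows "c ! (Suc i mod length c) \<in> {v \<in> {a<..rmost s}. s ! (v - 1)}"
proof -
  have "\<not> s ! (c ! i - 1) \<or> c ! i < c ! (Suc i mod length c)"
    using assms(3) by auto
  from thr_cycle_ascent[OF assms(1,2) this] assms(3) show ?thesis
    by auto
qed

text \<open>The successor on c of an isolated vertex in the window is a dominating vertex of the window,
  and so is the vertex where c enters the window from below.\<close>

lemma thr_cycle_isolated_count:
  assumes cyc: "thr_cycle s c" and a: "a < rmost s"
  shows "card ({v \<in> {a<..<rmost s}. \<not> s ! (v - 1)} \<inter> set c) + of_bool (\<exists>v\<in>set c. v \<le> a)
       \<le> card {v \<in> {a<..rmost s}. s ! (v - 1)}"
proof -
  define Z where "Z = {v \<in> {a<..<rmost s}. \<not> s ! (v - 1)}"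
  define D where "D = {v \<in> {a<..rmost s}. s ! (v - 1)}"
  define L where "L = length c"
  have dc: "distinct c"
    using cyc by (simp add: thr_cycle_def)
  have "finite D"
    by (simp add: D_def)
  then have D_bound: "card (D \<inter> set c) \<le> card D"
    by (simp add: card_mono)
  have to_D: "c ! (Suc i mod L) \<in> D"
    if "i < L" "c ! i \<in> Z \<or> c ! i \<le> a \<and> a < c ! (Suc i mod L)" for i
    using thr_cycle_step_into_window[OF cyc, of i a] that unfolding Z_def D_def L_def .
  show ?thesis
  proof (cases "(\<exists>v\<in>set c. v \<le> a) \<and> Z \<inter> set c \<noteq> {}")
    case False
    have "card (Z \<inter> set c) \<le> card (D \<inter> set c)"
      using card_le_by_cyclic_successor[OF dc, of "\<lambda>i. c ! i \<in> Z" D] to_D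
        card_positions_in[OF dc, of Z] by (simp add: L_def)
    moreover have "rmost s \<in> D"
      using a rmost_dominating[of s] by (simp add: D_def)
    then have "0 < card D"
      using \<open>finite D\<close> card_gt_0_iff by blast
    ultimately show ?thesis
      using False D_bound unfolding Z_def[symmetric] D_def[symmetric] by auto
  next
    case True
    then obtain p q where p: "p < L" "c ! p \<le> a" and q: "q < L" "c ! q \<in> Z"
      by (auto simp: in_set_conv_nth L_def)
    then have "\<not> c ! q \<le> a"
      by (auto simp: Z_def)
    from cyclic_transition[of p L q "\<lambda>i. c ! i \<le> a", OF p(1) q(1) p(2) this]
    obtain j where j: "j < L" "c ! j \<le> a" "\<not> c ! (Suc j mod L) \<le> a"
      by blast
    have "c ! (Suc i mod L) \<in> D" if "i < L" "c ! i \<in> Z \<or> i = j" for i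
      using that to_D j by (auto simp: not_le)
    then have "card {i. i < L \<and> (c ! i \<in> Z \<or> i = j)} \<le> card (D \<inter> set c)"
      unfolding L_def by (rule card_le_by_cyclic_successor[OF dc])
    moreover have "{i. i < L \<and> (c ! i \<in> Z \<or> i = j)} = insert j {i. i < L \<and> c ! i \<in> Z}"
      using j by auto
    moreover have "j \<notin> {i. i < L \<and> c ! i \<in> Z}"
      using j by (auto simp: Z_def)
    ultimately show ?thesis
      using card_positions_in[OF dc, of Z] True D_bound
      unfolding Z_def[symmetric] D_def[symmetric] by (simp add: L_def)
  qed
qed

lemma thr_cycle_window_bound:
  assumes cyc: "thr_cycle s c" and a: "a < rmost s"
  shows "length c + card {v \<in> {a<..<rmost s}. \<not> s ! (v - 1)}
       \<le> rmost s + card {v \<in> {a<..rmost s}. s ! (v - 1)}"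
proof -
  define Z where "Z = {v \<in> {a<..<rmost s}. \<not> s ! (v - 1)}"
  define below where "below = (\<exists>v\<in>set c. v \<le> a)"
  define lo where "lo = (if below then 0 else Suc a)"
  have count: "card (Z \<inter> set c) + of_bool below \<le> card {v \<in> {a<..rmost s}. s ! (v - 1)}"
    using thr_cycle_isolated_count[OF assms] unfolding Z_def below_def .
  have "finite Z"
    by (simp add: Z_def)
  then have Z_split: "card Z = card (Z \<inter> set c) + card (Z - set c)"
    by (rule card_Int_Diff)
  have "set c \<subseteq> {lo..rmost s} - (Z - set c)"
    using thr_cycle_le_rmost[OF cyc] by (auto simp: lo_def below_def not_le Suc_le_eq)
  then have "card (set c) \<le> card ({lo..rmost s} - (Z - set c))"
    by (intro card_mono) auto
  also have "\<dots> = card {lo..rmost s} - card (Z - set c)"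
    by (rule card_Diff_subset) (auto simp: Z_def lo_def \<open>finite Z\<close>)
  finally have "length c + card (Z - set c) \<le> rmost s + 1 - lo"
    using cyc a by (auto simp: thr_cycle_def distinct_card lo_def)
  then show ?thesis
    using count Z_split a unfolding Z_def[symmetric] lo_def by (auto split: if_splits)
qed

lemma count_list_drop_take:
  assumes "n \<le> length s"
  shows "count_list (drop a (take n s)) b = card {v \<in> {a<..n}. s ! (v - 1) = b}"
proof -
  have "drop a (take n s) = map (\<lambda>v. s ! (v - 1)) [Suc a..<Suc n]"
    using assms by (intro nth_equalityI) (auto simp del: upt_Suc)
  then show ?thesis
    by (simp add: count_list_eq_length_filter filter_map distinct_length_filter)
      (intro arg_cong[where f = card]; auto)
qed

lemma thr_cycle_length_bound:
  assumes cyc: "thr_cycle s c"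
  shows "int (length c) \<le> int (rmost s) + 1 - hval (take (rmost s - 1) s)"
proof -
  define r where "r = rmost s"
  define t where "t = take (r - 1) s"
  have "0 < length c"
    using cyc by (auto simp: thr_cycle_def)
  then have "0 < r"
    unfolding r_def by (rule thr_adj_rmost(1)[OF thr_cycle_adj[OF cyc]])
  then have r: "0 < r" "r \<le> length s" "s ! (r - 1)"
    using rmost_dominating unfolding r_def by auto
  have "hval t \<in> (\<lambda>k. excess (tail k t)) ` {0..length t}"
    unfolding hval_eq_Max_excess by (rule Max_in) auto
  then obtain k where k: "k \<le> r - 1" "hval t = excess (tail k t)"
    using r(2) by (auto simp: t_def)
  define a where "a = r - 1 - k"
  have tail: "tail k t = drop a (take (r - 1) s)"
    using r(2) by (simp add: tail_def t_def a_def)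
  have count: "count_list (tail k t) b = card {v \<in> {a<..r - 1}. s ! (v - 1) = b}" for b
    using r(2) by (simp add: tail count_list_drop_take)
  define U where "U = {v \<in> {a<..r - 1}. s ! (v - 1) = True}"
  have "finite U" "r \<notin> U"
    using r(1) by (auto simp: U_def intro: finite_subset[of _ "{a<..r - 1}"])
  moreover have "{v \<in> {a<..r}. s ! (v - 1)} = insert r U"
    using r by (auto simp: a_def U_def)
  ultimately have "card {v \<in> {a<..r}. s ! (v - 1)} = Suc (count_list (tail k t) True)"
    by (simp add: count U_def)
  moreover have "{v \<in> {a<..<r}. \<not> s ! (v - 1)} = {v \<in> {a<..r - 1}. s ! (v - 1) = False}"
    using r(1) by auto
  then have "card {v \<in> {a<..<r}. \<not> s ! (v - 1)} = count_list (tail k t) False"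
    by (simp only: count)
  moreover have "length c + card {v \<in> {a<..<r}. \<not> s ! (v - 1)} \<le> r + card {v \<in> {a<..r}. s ! (v - 1)}"
    using thr_cycle_window_bound[OF cyc, of a] r(1) unfolding r_def a_def by simp
  ultimately show ?thesis
    using k(2) unfolding excess_def r_def[symmetric] t_def[symmetric] by simp
qed

theorem mainTheorem9:
  fixes s :: "bool list"
  assumes "count_list s True \<ge> 2"
  shows "int (longest_cycle s) = int (rmost s) + 1 - hval (take (rmost s - 1) s)"
proof -
  obtain c where c: "thr_cycle s c"
    "int (length c) = int (rmost s) + 1 - hval (take (rmost s - 1) s)"
    using exists_thr_cycle_length_eq[OF assms] by blast
  have "longest_cycle s = length c"
  proof (rule longest_cycle_eqI[OF c(1)])
    fix c' assume "thr_cycle s c'"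
    then show "length c' \<le> length c"
      using thr_cycle_length_bound c(2) by fastforce
  qed
  with c(2) show ?thesis
    by simp
qed

end
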